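(* Let $L_1,L_2>0$, $N_{\max}\ge1$, $M>0$, $\bar c\in(0,1)$, and let $t^*$ be the unique positive solution of $e^{L_2t^*}-\big(L_2+\frac{L_2^2}{L_1\sqrt{N_{\max}}}\big)t^*-1=0$. Define $$\bar t:=\sup\Big\{t>0:\ e^{L_2t}-\Big(L_2+\bar c\frac{L_2^2}{L_1\sqrt{N_{\max}}}\Big)t-1<0\Big\}.$$ Then $0<\bar t<t^*$, and the functions $H_1(t):=Mt$, $H_\kappa(t):=\int_0^te^{L_2(t-s)}L_1\sqrt{N_{\max}}H_{\kappa-1}(s)\,ds$ ($\kappa\ge2$) satisfy $H_\kappa(t)\le\bar c^{\,\kappa-1}Mt$ for all $t\in[0,\bar t]$ and all $\kappa\ge1$. *)

theory Defs
  imports "HOL-Analysis.Analysis"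
begin

text \<open>The iterated functions H_kappa, indexed by kappa >= 1. The value at index 0 is
  an irrelevant junk value (0).\<close>
fun Hk :: "real \<Rightarrow> real \<Rightarrow> nat \<Rightarrow> real \<Rightarrow> nat \<Rightarrow> real \<Rightarrow> real" where
  "Hk L1 L2 Nmax M 0 t = 0"
| "Hk L1 L2 Nmax M (Suc 0) t = M * t"
| "Hk L1 L2 Nmax M (Suc (Suc k)) t =
     integral {0..t} (\<lambda>s. exp (L2 * (t - s)) * L1 * sqrt (real Nmax) * Hk L1 L2 Nmax M (Suc k) s)"

end

theory Submission imports Defs begin

text \<open>With \<open>K = L1 sqrt Nmax\<close> one has \<open>\<integral>\<^sub>0\<^sup>t exp (L2 (t - s)) K s ds = K (exp (L2 t) - 1 - L2 t) / L2\<^sup>2\<close>,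
  so the bound \<open>H\<^sub>\<kappa> s \<le> c\<^sup>\<kappa>\<^sup>-\<^sup>1 M s\<close> passes from \<open>\<kappa>\<close> to \<open>\<kappa> + 1\<close> at every \<open>t\<close> with
  \<open>g t = exp (L2 t) - (L2 + c L2\<^sup>2 / K) t - 1 \<le> 0\<close>. As \<open>g\<close> is convex with \<open>g 0 = 0\<close>,
  \<open>g t / t\<close> is increasing: \<open>g\<close> is negative just to the right of \<open>0\<close> (its slope there is \<open>-c L2\<^sup>2 / K\<close>)
  and stays positive once it is positive. Hence \<open>g \<le> 0\<close> on all of \<open>[0, tbar]\<close>, and \<open>tbar < tstar\<close>
  because \<open>g tstar > 0\<close>, the equation for \<open>tstar\<close> having the larger coefficient \<open>1 > c\<close>.\<close>

definition exp_gap :: "real \<Rightarrow> real \<Rightarrow> real \<Rightarrow> real" where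
  "exp_gap a b t = exp (a * t) - (a + b) * t - 1"

lemma exp_gap_0 [simp]: "exp_gap a b 0 = 0"
  by (simp add: exp_gap_def)

lemma continuous_on_exp_gap: "continuous_on A (exp_gap a b)"
  unfolding exp_gap_def by (intro continuous_intros)

lemma exp_gap_scale_le:
  assumes "0 \<le> l" "l \<le> 1"
  shows "exp_gap a b (l * u) \<le> l * exp_gap a b u"
proof -
  have "exp ((1 - l) * 0 + l * (a * u)) \<le> (1 - l) * exp 0 + l * exp (a * u)"
    using convex_onD[OF exp_convex, of l 0 "a * u"] assms by simp
  thus ?thesis by (simp add: exp_gap_def algebra_simps)
qed

lemma exp_gap_pos_mono:
  assumes "0 < s" "0 < exp_gap a b s" "s \<le> t"
  shows "0 < exp_gap a b t"
proof -
  have "t > 0" using assms by simp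
  have "exp_gap a b ((s / t) * t) \<le> (s / t) * exp_gap a b t"
    by (rule exp_gap_scale_le) (use assms \<open>t > 0\<close> in auto)
  with assms have "0 < (s / t) * exp_gap a b t" by simp
  moreover have "s / t > 0" using assms \<open>t > 0\<close> by simp
  ultimately show ?thesis by (rule zero_less_mult_pos)
qed

lemma exp_gap_neg_near_0:
  assumes "a > 0" "b > 0"
  shows "\<exists>t>0. exp_gap a b t < 0"
proof -
  define t where "t = min (1 / a) (b / a\<^sup>2) / 2"
  have "t > 0" using assms by (simp add: t_def)
  have "t \<le> (1 / a) / 2" "t \<le> (b / a\<^sup>2) / 2" by (simp_all add: t_def)
  hence "a * t \<le> a * ((1 / a) / 2)" "a\<^sup>2 * t \<le> a\<^sup>2 * ((b / a\<^sup>2) / 2)"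
    using assms by (intro mult_left_mono; simp)+
  hence "a * t \<le> 1" "a\<^sup>2 * t < b" using assms by simp_all
  have "exp (a * t) \<le> 1 + a * t + (a * t)\<^sup>2"
    using exp_bound[of "a * t"] \<open>a * t \<le> 1\<close> assms \<open>t > 0\<close> by simp
  hence "exp_gap a b t \<le> t * (a\<^sup>2 * t - b)"
    by (simp add: exp_gap_def algebra_simps power2_eq_square)
  also have "\<dots> < 0" using \<open>t > 0\<close> \<open>a\<^sup>2 * t < b\<close> by (simp add: mult_pos_neg)
  finally show ?thesis using \<open>t > 0\<close> by blast
qed

lemma Sup_exp_gap_neg:
  fixes a b tau :: real
  defines "r \<equiv> Sup {t. t > 0 \<and> exp_gap a b t < 0}"
  assumes "a > 0" "b > 0" "tau > 0" "exp_gap a b tau > 0"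
  shows "0 < r" "r < tau" "\<forall>t\<in>{0..r}. exp_gap a b t \<le> 0"
proof -
  define S where "S = {t. t > 0 \<and> exp_gap a b t < 0}"
  have below: "s < t" if "s \<in> S" "t > 0" "exp_gap a b t > 0" for s t
    using exp_gap_pos_mono[of t a b s] that by (force simp: S_def)
  obtain t0 where "t0 \<in> S"
    using exp_gap_neg_near_0[OF assms(2,3)] by (auto simp: S_def)
  hence "S \<noteq> {}" by blast
  have "bdd_above S"
    using below[OF _ assms(4,5)] by (intro bdd_aboveI[of S tau]) (simp add: less_imp_le)
  have r_le: "r \<le> t" if "t > 0" "exp_gap a b t > 0" for t
    unfolding r_def S_def[symmetric]
    using \<open>S \<noteq> {}\<close> below[OF _ that] by (simp add: cSup_least less_imp_le)
  show "0 < r"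
    using cSup_upper[OF \<open>t0 \<in> S\<close> \<open>bdd_above S\<close>] \<open>t0 \<in> S\<close> by (simp add: r_def S_def)
  have "r \<in> closure S"
    unfolding r_def S_def[symmetric] using \<open>S \<noteq> {}\<close> \<open>bdd_above S\<close> by (rule closure_contains_Sup)
  moreover have "closure S \<subseteq> {t. exp_gap a b t \<le> 0}"
    by (rule closure_minimal)
      (auto simp: S_def intro!: closed_Collect_le continuous_on_exp_gap)
  ultimately have "exp_gap a b r \<le> 0" by blast
  then show "r < tau"
    using r_le[OF assms(4,5)] assms(5) by (cases "r = tau") auto
  show "\<forall>t\<in>{0..r}. exp_gap a b t \<le> 0"
  proof
    fix t assume t: "t \<in> {0..r}"
    show "exp_gap a b t \<le> 0"
    proof (cases "t = 0 \<or> t = r")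
      case False
      with t r_le[of t] show ?thesis by fastforce
    qed (use \<open>exp_gap a b r \<le> 0\<close> in auto)
  qed
qed

lemma exp_diff_times_has_integral:
  fixes a t :: real
  assumes "a \<noteq> 0" "t \<ge> 0"
  shows "((\<lambda>s. exp (a * (t - s)) * s) has_integral (exp (a * t) - 1 - a * t) / a\<^sup>2) {0..t}"
proof -
  define F where "F s = - exp (a * (t - s)) * s / a - exp (a * (t - s)) / a\<^sup>2" for s
  have "((\<lambda>s. exp (a * (t - s)) * s) has_integral (F t - F 0)) {0..t}"
  proof (rule fundamental_theorem_of_calculus[OF assms(2)])
    fix x assume "x \<in> {0..t}"
    have "(F has_real_derivative exp (a * (t - x)) * x) (at x within {0..t})"
      unfolding F_def using assms
      by (auto intro!: derivative_eq_intros simp: field_simps power2_eq_square)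
    thus "(F has_vector_derivative exp (a * (t - x)) * x) (at x within {0..t})"
      by (simp add: has_real_derivative_iff_has_vector_derivative)
  qed
  moreover have "F t - F 0 = (exp (a * t) - 1 - a * t) / a\<^sup>2"
    unfolding F_def using assms by (simp add: field_simps power2_eq_square)
  ultimately show ?thesis by simp
qed

text \<open>Pulling \<open>exp (L2 * t)\<close> out of the integral leaves \<open>t\<close> only as the upper limit,
  so continuity of \<open>Hk\<close> reduces to continuity of an indefinite integral.\<close>

lemma Hk_Suc_Suc_eq_exp_mult:
  "Hk L1 L2 Nm M (Suc (Suc k)) t =
     exp (L2 * t) * integral {0..t} (\<lambda>s. exp (- (L2 * s)) * L1 * sqrt (real Nm) * Hk L1 L2 Nm M (Suc k) s)"
proof -
  have "Hk L1 L2 Nm M (Suc (Suc k)) t = integral {0..t}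
      (\<lambda>s. exp (L2 * t) * (exp (- (L2 * s)) * L1 * sqrt (real Nm) * Hk L1 L2 Nm M (Suc k) s))"
    by (simp add: right_diff_distrib exp_diff exp_minus field_simps)
  thus ?thesis by (simp add: integral_mult_right)
qed

lemma continuous_on_Hk: "continuous_on {0..T} (Hk L1 L2 Nm M (Suc k))"
proof (induction k arbitrary: T)
  case 0
  then show ?case by (auto intro!: continuous_intros)
next
  case (Suc k)
  let ?f = "\<lambda>s. exp (- (L2 * s)) * L1 * sqrt (real Nm) * Hk L1 L2 Nm M (Suc k) s"
  have "?f integrable_on {0..T}"
    using Suc by (auto intro!: integrable_continuous_real continuous_intros)
  hence "continuous_on {0..T} (\<lambda>t. integral {0..t} ?f)"
    by (rule indefinite_integral_continuous_1)
  hence "continuous_on {0..T} (\<lambda>t. exp (L2 * t) * integral {0..t} ?f)"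
    by (auto intro!: continuous_intros)
  thus ?case by (simp only: Hk_Suc_Suc_eq_exp_mult)
qed

lemma Hk_le_geometric:
  fixes L1 L2 M c t :: real
  assumes "L1 > 0" "L2 > 0" "Nm \<ge> 1" "M \<ge> 0" "c \<ge> 0" "t \<ge> 0"
    and gap: "\<And>s. s \<in> {0..t} \<Longrightarrow> exp_gap L2 (c * L2\<^sup>2 / (L1 * sqrt (real Nm))) s \<le> 0"
  shows "Hk L1 L2 Nm M (Suc k) t \<le> c ^ k * M * t"
  using assms(6) gap
proof (induction k arbitrary: t)
  case 0
  then show ?case by simp
next
  case (Suc k)
  define K where "K = L1 * sqrt (real Nm)"
  have "K > 0" using assms(1,3) by (simp add: K_def)
  let ?C = "c ^ k * M * K"
  have C: "?C \<ge> 0" using assms(4,5) \<open>K > 0\<close> by simp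
  have hi: "((\<lambda>s. ?C * (exp (L2 * (t - s)) * s))
      has_integral ?C * ((exp (L2 * t) - 1 - L2 * t) / L2\<^sup>2)) {0..t}"
    using exp_diff_times_has_integral[of L2 t] assms(2) Suc.prems(1) by (intro has_integral_mult_right) auto
  have IH: "Hk L1 L2 Nm M (Suc k) s \<le> c ^ k * M * s" if "s \<in> {0..t}" for s
    using that Suc.prems(2) by (intro Suc.IH) auto
  have "Hk L1 L2 Nm M (Suc (Suc k)) t
      = integral {0..t} (\<lambda>s. exp (L2 * (t - s)) * K * Hk L1 L2 Nm M (Suc k) s)"
    by (simp add: K_def mult.assoc)
  also have "\<dots> \<le> integral {0..t} (\<lambda>s. ?C * (exp (L2 * (t - s)) * s))"
  proof (rule integral_le[OF _ has_integral_integrable[OF hi]])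
    show "(\<lambda>s. exp (L2 * (t - s)) * K * Hk L1 L2 Nm M (Suc k) s) integrable_on {0..t}"
      by (intro integrable_continuous_real continuous_intros continuous_on_Hk)
    fix s assume "s \<in> {0..t}"
    with IH have "exp (L2 * (t - s)) * K * Hk L1 L2 Nm M (Suc k) s
        \<le> exp (L2 * (t - s)) * K * (c ^ k * M * s)"
      using \<open>K > 0\<close> by (intro mult_left_mono) auto
    thus "exp (L2 * (t - s)) * K * Hk L1 L2 Nm M (Suc k) s \<le> ?C * (exp (L2 * (t - s)) * s)"
      by (simp add: algebra_simps)
  qed
  also have "\<dots> = ?C * ((exp (L2 * t) - 1 - L2 * t) / L2\<^sup>2)"
    using hi by (rule integral_unique)
  also have "\<dots> \<le> ?C * (c * t / K)"
  proof (rule mult_left_mono[OF _ C])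
    have "exp_gap L2 (c * L2\<^sup>2 / K) t \<le> 0"
      using Suc.prems by (simp add: K_def)
    hence "exp (L2 * t) - 1 - L2 * t \<le> c * L2\<^sup>2 * t / K"
      by (simp add: exp_gap_def algebra_simps)
    thus "(exp (L2 * t) - 1 - L2 * t) / L2\<^sup>2 \<le> c * t / K"
      using assms(2) \<open>K > 0\<close> by (simp add: divide_simps mult.commute mult.left_commute)
  qed
  also have "\<dots> = c ^ Suc k * M * t" using \<open>K > 0\<close> by (simp add: field_simps)
  finally show ?case .
qed

theorem mainTheorem6:
  fixes L1 L2 M cbar tstar :: real and Nmax :: nat
  assumes "L1 > 0" and "L2 > 0" and "Nmax \<ge> 1" and "M > 0"
    and "0 < cbar" and "cbar < 1"
    and "tstar > 0"
    and "exp (L2 * tstar) - (L2 + L2\<^sup>2 / (L1 * sqrt (real Nmax))) * tstar - 1 = 0"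
    and "\<forall>t>0. exp (L2 * t) - (L2 + L2\<^sup>2 / (L1 * sqrt (real Nmax))) * t - 1 = 0 \<longrightarrow> t = tstar"
  shows "0 < Sup {t. t > 0 \<and> exp (L2 * t) - (L2 + cbar * L2\<^sup>2 / (L1 * sqrt (real Nmax))) * t - 1 < 0}
       \<and> Sup {t. t > 0 \<and> exp (L2 * t) - (L2 + cbar * L2\<^sup>2 / (L1 * sqrt (real Nmax))) * t - 1 < 0} < tstar
       \<and> (\<forall>\<kappa>\<ge>1. \<forall>t\<in>{0..Sup {t. t > 0 \<and> exp (L2 * t) - (L2 + cbar * L2\<^sup>2 / (L1 * sqrt (real Nmax))) * t - 1 < 0}}.
             Hk L1 L2 Nmax M \<kappa> t \<le> cbar ^ (\<kappa> - 1) * M * t)"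
proof -
  define K where "K = L1 * sqrt (real Nmax)"
  define b where "b = cbar * L2\<^sup>2 / K"
  have "K > 0" using assms(1,3) by (simp add: K_def)
  have "b > 0" using \<open>K > 0\<close> assms(2,5) by (simp add: b_def)
  have "b * tstar < L2\<^sup>2 / K * tstar"
    using \<open>K > 0\<close> assms(2,6,7) by (simp add: b_def divide_strict_right_mono)
  hence "exp_gap L2 b tstar > 0"
    using assms(8) by (simp add: exp_gap_def K_def algebra_simps)
  note r = Sup_exp_gap_neg[OF assms(2) \<open>b > 0\<close> assms(7) this]
  have "Hk L1 L2 Nmax M \<kappa> t \<le> cbar ^ (\<kappa> - 1) * M * t"
    if "\<kappa> \<ge> 1" "t \<in> {0..Sup {t. t > 0 \<and> exp_gap L2 b t < 0}}" for \<kappa> t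
  proof -
    from \<open>\<kappa> \<ge> 1\<close> have "\<kappa> = Suc (\<kappa> - 1)" by simp
    moreover have "Hk L1 L2 Nmax M (Suc (\<kappa> - 1)) t \<le> cbar ^ (\<kappa> - 1) * M * t"
      using that(2) r(3) assms(1-5) by (intro Hk_le_geometric) (auto simp: b_def K_def)
    ultimately show ?thesis by simp
  qed
  moreover have "{t. t > 0 \<and> exp (L2 * t) - (L2 + cbar * L2\<^sup>2 / (L1 * sqrt (real Nmax))) * t - 1 < 0}
      = {t. t > 0 \<and> exp_gap L2 b t < 0}"
    by (simp add: exp_gap_def b_def K_def)
  ultimately show ?thesis using r(1,2) by auto
qed

end
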